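(* Let $\mathcal{C}_{\mathrm{tr}}$ be the class of all transitive permutation groups. Then \[ \lim_{n} \frac{\mathbf{F}_{\mathcal{C}_{\mathrm{tr}}}(n)}{n} = \frac{1}{2}. \]
   Context: For a transitive permutation group $G$ on a finite set $\Omega$ with $|\Omega|\ge 2$, a subset $A\subseteq\Omega$ is self-separable for $G$ if there exists $g\in G$ with $A\cap A^g=\emptyset$; $\mathbf{m}(G)$ is the minimum cardinality of a subset of $\Omega$ that is not self-separable for $G$. For a family $\mathcal{C}$ of transitive permutation groups, $\mathcal{C}_n$ is the set of members of degree $n$, $X_{\mathcal{C}}=\{n:\mathcal{C}_n\ne\emptyset\}$, and $\mathbf{F}_{\mathcal{C}}:X_{\mathcal{C}}\to\mathbb{N}$, $n\mapsto\max\{\mathbf{m}(G):G\in\mathcal{C}_n\}$. *)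

theory Defs
  imports "HOL-Combinatorics.Permutations" Complex_Main
begin

text \<open>Permutation groups of degree n are taken on the set {0..<n}; every permutation
group of degree n is permutation-isomorphic to one on {0..<n}, and m(G) is invariant
under permutation isomorphism.\<close>

definition perm_group_on :: "nat \<Rightarrow> (nat \<Rightarrow> nat) set \<Rightarrow> bool" where
  "perm_group_on n G \<longleftrightarrow>
     (\<forall>g\<in>G. g permutes {0..<n}) \<and> id \<in> G \<and>
     (\<forall>g\<in>G. \<forall>h\<in>G. g \<circ> h \<in> G) \<and> (\<forall>g\<in>G. inv g \<in> G)"

definition transitive_perm_group :: "nat \<Rightarrow> (nat \<Rightarrow> nat) set \<Rightarrow> bool" where
  "transitive_perm_group n G \<longleftrightarrow>
     perm_group_on n G \<and> (\<forall>x<n. \<forall>y<n. \<exists>g\<in>G. g x = y)"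

definition self_separable :: "(nat \<Rightarrow> nat) set \<Rightarrow> nat set \<Rightarrow> bool" where
  "self_separable G A \<longleftrightarrow> (\<exists>g\<in>G. A \<inter> g ` A = {})"

definition m_inv :: "nat \<Rightarrow> (nat \<Rightarrow> nat) set \<Rightarrow> nat" where
  "m_inv n G = (LEAST k. \<exists>A. A \<subseteq> {0..<n} \<and> card A = k \<and> \<not> self_separable G A)"

text \<open>F for the class of all transitive permutation groups; its domain X is {n. n >= 2}.\<close>
definition F_tr :: "nat \<Rightarrow> nat" where
  "F_tr n = Max {m_inv n G | G. transitive_perm_group n G}"

end

theory Submission
  imports Defs
begin

text \<open>A permutation of an n-set maps A to a set of the same size, so A can be
disjoint from its image only if 2|A| \<le> n; conversely, in the full symmetric group any A
with 2|A| \<le> n can be swapped with a disjoint set of the same size. Hence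
m(G) \<le> \<lfloor>n/2\<rfloor> + 1 for every permutation group of degree n, with equality for the symmetric
group, so F(n) = \<lfloor>n/2\<rfloor> + 1 and F(n)/n tends to 1/2.\<close>

lemma permutes_disjoint_image_card_le:
  assumes "g permutes S" "finite S" "A \<subseteq> S" "A \<inter> g ` A = {}"
  shows "2 * card A \<le> card S"
proof -
  have finA: "finite A" using assms(2,3) finite_subset by blast
  have "2 * card A = card A + card (g ` A)"
    using permutes_inj[OF assms(1)] by (simp add: card_image inj_on_subset)
  also have "\<dots> = card (A \<union> g ` A)"
    using finA assms(4) by (simp add: card_Un_disjoint)
  also have "\<dots> \<le> card S"
    using assms(2,3) permutes_image[OF assms(1)] by (intro card_mono) auto
  finally show ?thesis .
qed

lemma exists_permutes_disjoint_image:
  assumes "finite S" "A \<subseteq> S" "2 * card A \<le> card S"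
  obtains g where "g permutes S" "A \<inter> g ` A = {}"
proof -
  have finA: "finite A" using assms(1,2) finite_subset by blast
  have "card A \<le> card (S - A)"
    using assms finA by (simp add: card_Diff_subset)
  then obtain C where C: "C \<subseteq> S - A" "card C = card A"
    by (meson obtain_subset_with_card_n)
  moreover have "finite C" using C(1) assms(1) by (meson Diff_subset finite_subset)
  ultimately obtain f where f: "bij_betw f A C"
    using finite_same_card_bij[OF finA] by metis
  have disj: "A \<inter> C = {}" using C(1) by blast
  define h where "h x = (if x \<in> A then f x else inv_into A f x)" for x
  have "bij_betw h (A \<union> C) (C \<union> A)"
    unfolding h_def
    by (rule bij_betw_disjoint_Un[OF f bij_betw_inv_into[OF f] disj]) (use disj in blast)
  then have "restrict_id h (A \<union> C) permutes (A \<union> C)"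
    by (simp add: Un_commute permutes_restrict_id)
  then have "restrict_id h (A \<union> C) permutes S"
    by (rule permutes_subset) (use C(1) assms(2) in blast)
  moreover have "restrict_id h (A \<union> C) ` A = C"
    using f by (auto simp: h_def bij_betw_def)
  ultimately show thesis
    using that disj by metis
qed

lemma m_inv_le_card:
  assumes "A \<subseteq> {0..<n}" "\<not> self_separable G A"
  shows "m_inv n G \<le> card A"
  unfolding m_inv_def by (rule Least_le) (use assms in blast)

lemma m_inv_attained:
  assumes "A \<subseteq> {0..<n}" "\<not> self_separable G A"
  obtains B where "B \<subseteq> {0..<n}" "card B = m_inv n G" "\<not> self_separable G B"
proof -
  have "\<exists>k B. B \<subseteq> {0..<n} \<and> card B = k \<and> \<not> self_separable G B"
    using assms by blast
  from LeastI_ex[OF this] show thesis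
    using that unfolding m_inv_def by blast
qed

lemma not_self_separable_if_large:
  assumes "perm_group_on n G" "A \<subseteq> {0..<n}" "n < 2 * card A"
  shows "\<not> self_separable G A"
proof
  assume "self_separable G A"
  then obtain g where "g \<in> G" "A \<inter> g ` A = {}"
    unfolding self_separable_def by blast
  moreover from this(1) have "g permutes {0..<n}"
    using assms(1) unfolding perm_group_on_def by blast
  ultimately show False
    using permutes_disjoint_image_card_le[of g "{0..<n}" A] assms(2,3) by simp
qed

lemma m_inv_le:
  assumes "perm_group_on n G" "n \<ge> 1"
  shows "m_inv n G \<le> n div 2 + 1"
proof -
  have half: "{0..<n div 2 + 1} \<subseteq> {0..<n}" using assms(2) by auto
  have "n < 2 * card {0..<n div 2 + 1}" by simp
  with half have "\<not> self_separable G {0..<n div 2 + 1}"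
    by (rule not_self_separable_if_large[OF assms(1)])
  with half have "m_inv n G \<le> card {0..<n div 2 + 1}"
    by (rule m_inv_le_card)
  then show ?thesis by simp
qed

definition sym_perms :: "nat \<Rightarrow> (nat \<Rightarrow> nat) set" where
  "sym_perms n = {p. p permutes {0..<n}}"

lemma transitive_perm_group_sym_perms: "transitive_perm_group n (sym_perms n)"
  unfolding transitive_perm_group_def perm_group_on_def sym_perms_def
proof (intro conjI ballI allI impI)
  fix x y assume "x < n" "y < n"
  then have "Transposition.transpose x y permutes {0..<n}"
    by (intro permutes_swap_id) auto
  then show "\<exists>g\<in>{p. p permutes {0..<n}}. g x = y" by force
qed (auto simp: permutes_id permutes_compose permutes_inv)

lemma self_separable_sym_perms_iff:
  assumes "A \<subseteq> {0..<n}"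
  shows "self_separable (sym_perms n) A \<longleftrightarrow> 2 * card A \<le> n"
proof
  assume "self_separable (sym_perms n) A"
  then obtain g where "g permutes {0..<n}" "A \<inter> g ` A = {}"
    unfolding self_separable_def sym_perms_def by blast
  then show "2 * card A \<le> n"
    using permutes_disjoint_image_card_le[of g "{0..<n}" A] assms by simp
next
  assume "2 * card A \<le> n"
  then obtain g where "g permutes {0..<n}" "A \<inter> g ` A = {}"
    using exists_permutes_disjoint_image[of "{0..<n}" A] assms by auto
  then show "self_separable (sym_perms n) A"
    unfolding self_separable_def sym_perms_def by blast
qed

lemma m_inv_sym_perms:
  assumes "n \<ge> 1"
  shows "m_inv n (sym_perms n) = n div 2 + 1"
proof -
  have half: "{0..<n div 2 + 1} \<subseteq> {0..<n}" using assms by auto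
  then have "\<not> self_separable (sym_perms n) {0..<n div 2 + 1}"
    by (simp add: self_separable_sym_perms_iff)
  then obtain B where "B \<subseteq> {0..<n}" "card B = m_inv n (sym_perms n)"
      "\<not> self_separable (sym_perms n) B"
    by (rule m_inv_attained[OF half])
  then have "n div 2 + 1 \<le> m_inv n (sym_perms n)"
    by (simp add: self_separable_sym_perms_iff)
  moreover have "m_inv n (sym_perms n) \<le> n div 2 + 1"
    using m_inv_le transitive_perm_group_sym_perms assms
    unfolding transitive_perm_group_def by blast
  ultimately show ?thesis by simp
qed

lemma F_tr_eq:
  assumes "n \<ge> 1"
  shows "F_tr n = n div 2 + 1"
  unfolding F_tr_def
proof (rule Max_eqI)
  let ?S = "{m_inv n G | G. transitive_perm_group n G}"
  show bound: "k \<le> n div 2 + 1" if "k \<in> ?S" for k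
  proof -
    from that obtain G where "k = m_inv n G" "transitive_perm_group n G" by blast
    then show ?thesis
      using m_inv_le[OF _ assms] unfolding transitive_perm_group_def by blast
  qed
  show "finite ?S"
    by (rule finite_subset[of _ "{..n div 2 + 1}"]) (use bound in auto)
  have "m_inv n (sym_perms n) \<in> ?S"
    using transitive_perm_group_sym_perms by blast
  then show "n div 2 + 1 \<in> ?S"
    by (simp only: m_inv_sym_perms[OF assms])
qed

lemma F_tr_over_n_bounds:
  assumes "n \<ge> 1"
  shows "1 / 2 \<le> real (F_tr n) / real n" "real (F_tr n) / real n \<le> 1 / 2 + 1 / real n"
proof -
  have "real n \<le> 2 * real (F_tr n)" "2 * real (F_tr n) \<le> real n + 2"
    using F_tr_eq[OF assms] by linarith+
  moreover have "real n > 0" using assms by simp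
  ultimately show "1 / 2 \<le> real (F_tr n) / real n" "real (F_tr n) / real n \<le> 1 / 2 + 1 / real n"
    by (simp_all add: field_simps)
qed

theorem theoremB:
  shows "(\<lambda>n. real (F_tr n) / real n) \<longlonglongrightarrow> 1 / 2"
proof (rule real_tendsto_sandwich[of "\<lambda>n. 1 / 2" _ _ "\<lambda>n. 1 / 2 + 1 / real n"])
  show "\<forall>\<^sub>F n in sequentially. 1 / 2 \<le> real (F_tr n) / real n"
    using eventually_ge_at_top[of "1::nat"] by eventually_elim (rule F_tr_over_n_bounds)
  show "\<forall>\<^sub>F n in sequentially. real (F_tr n) / real n \<le> 1 / 2 + 1 / real n"
    using eventually_ge_at_top[of "1::nat"] by eventually_elim (rule F_tr_over_n_bounds)
  show "(\<lambda>n. 1 / 2) \<longlonglongrightarrow> (1 / 2 :: real)" by simp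
  show "(\<lambda>n. 1 / 2 + 1 / real n) \<longlonglongrightarrow> (1 / 2 :: real)"
    using tendsto_add[OF tendsto_const lim_1_over_n] by simp
qed

end
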